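(* Let $p$ be an even positive integer, $0\le\alpha\le1$, and for positive integers $j$ define $$g(j)=\prod_{i=1}^j\frac{i+\alpha}{i+1}\cdot\frac{p-i}{p-i-1+\alpha}.$$ Then $g(j)\simeq\left(\frac{1}{j+1}\right)^{1-\alpha}$ for all $1\le j\le p/2-1$.
   Context: $f\simeq h$ means there are constants $c_1,c_2>0$, not depending on $p$ or $j$, with $c_1h\le f\le c_2h$. *)

theory Defs
  imports Complex_Main
begin

definition g_fun :: "nat \<Rightarrow> real \<Rightarrow> nat \<Rightarrow> real" where
  "g_fun p \<alpha> j = (\<Prod>i=1..j. ((real i + \<alpha>) / (real i + 1)) *
                                 ((real p - real i) / (real p - real i - 1 + \<alpha>)))"

end

theory Submission
  imports Defs "HOL-Analysis.Analysis"
begin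

text \<open>Split \<open>g\<close> as \<open>A\<^sub>j B\<^sub>j\<close> with \<open>A\<^sub>j = \<Prod>(i + \<alpha>)/(i + 1)\<close> and
  \<open>B\<^sub>j = \<Prod>(p - i)/(p - i - 1 + \<alpha>)\<close>. By Bernoulli's inequality for the concave power
  \<open>t \<mapsto> t\<^bsup>1-\<alpha>\<^esup>\<close>, each factor of \<open>A\<^sub>j\<close> lies between \<open>(i/(i+1))\<^bsup>1-\<alpha>\<^esup>\<close> and
  \<open>((i+1)/(i+2))\<^bsup>1-\<alpha>\<^esup>\<close>; these telescope, so \<open>A\<^sub>j \<simeq> (j+1)\<^bsup>\<alpha>-1\<^esup>\<close>.
  Each factor of \<open>B\<^sub>j\<close> lies between \<open>1\<close> and \<open>(p-i)/(p-i-1)\<close>, which telescope to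
  \<open>(p-1)/(p-1-j) \<le> 2\<close> for \<open>j \<le> p/2 - 1\<close>.\<close>

lemma powr_le_one_plus_mult:
  fixes x b :: real
  assumes "-1 < x" "0 \<le> b" "b \<le> 1"
  shows "(1 + x) powr b \<le> 1 + b * x"
proof -
  have "(1 + x) powr b * 1 powr (1 - b) \<le> b * (1 + x) + (1 - b) * 1"
    using Youngs_inequality_0[of b "1 - b" "1 + x" 1] assms by simp
  then show ?thesis by (simp add: algebra_simps)
qed

lemma one_minus_mult_le_powr:
  fixes x b :: real
  assumes "0 \<le> x" "0 \<le> b" "b \<le> 1"
  shows "1 - b * x \<le> (1 / (1 + x)) powr b"
proof (cases "b * x < 1")
  case True
  have "(1 - b * x) * (1 + x) powr b \<le> (1 - b * x) * (1 + b * x)"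
    using True assms powr_le_one_plus_mult[of x b] by (intro mult_left_mono) auto
  also have "\<dots> = 1 - (b * x)\<^sup>2"
    by (simp add: algebra_simps power2_eq_square)
  also have "\<dots> \<le> 1"
    by simp
  finally show ?thesis
    using assms by (simp add: powr_divide pos_le_divide_eq)
next
  case False
  then show ?thesis by (smt (verit) powr_ge_zero)
qed

lemma powr_le_shifted_ratio:
  fixes t \<alpha> :: real
  assumes "0 < t" "0 \<le> \<alpha>" "\<alpha> \<le> 1"
  shows "(t / (t + 1)) powr (1 - \<alpha>) \<le> (t + \<alpha>) / (t + 1)"
proof -
  have "(1 + (- 1 / (t + 1))) powr (1 - \<alpha>) \<le> 1 + (1 - \<alpha>) * (- 1 / (t + 1))"
    using assms by (intro powr_le_one_plus_mult) (auto simp: field_simps)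
  then show ?thesis
    using assms by (simp add: field_simps)
qed

lemma shifted_ratio_le_powr:
  fixes t \<alpha> :: real
  assumes "0 \<le> t" "0 \<le> \<alpha>" "\<alpha> \<le> 1"
  shows "(t + \<alpha>) / (t + 1) \<le> ((t + 1) / (t + 2)) powr (1 - \<alpha>)"
proof -
  have "1 - (1 - \<alpha>) * (1 / (t + 1)) \<le> (1 / (1 + 1 / (t + 1))) powr (1 - \<alpha>)"
    using assms by (intro one_minus_mult_le_powr) auto
  moreover have "1 / (1 + 1 / (t + 1)) = (t + 1) / (t + 2)"
    using assms by (simp add: field_simps)
  ultimately show ?thesis
    using assms by (simp add: field_simps)
qed

lemma prod_shifted_ratio_lower:
  fixes \<alpha> :: real
  assumes "0 \<le> \<alpha>" "\<alpha> \<le> 1"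
  shows "(1 / (real j + 1)) powr (1 - \<alpha>) \<le> (\<Prod>i=1..j. (real i + \<alpha>) / (real i + 1))"
proof -
  have "(\<Prod>i=1..j. real i / (real i + 1)) = 1 / (real j + 1)"
    by (induction j) (auto simp: field_simps)
  then have "(1 / (real j + 1)) powr (1 - \<alpha>) = (\<Prod>i=1..j. (real i / (real i + 1)) powr (1 - \<alpha>))"
    by (metis prod_powr_distrib)
  also have "\<dots> \<le> (\<Prod>i=1..j. (real i + \<alpha>) / (real i + 1))"
    using assms by (intro prod_mono) (auto intro: powr_le_shifted_ratio)
  finally show ?thesis .
qed

lemma prod_shifted_ratio_upper:
  fixes \<alpha> :: real
  assumes "0 \<le> \<alpha>" "\<alpha> \<le> 1"
  shows "(\<Prod>i=1..j. (real i + \<alpha>) / (real i + 1)) \<le> (2 / (real j + 2)) powr (1 - \<alpha>)"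
proof -
  have "(\<Prod>i=1..j. (real i + \<alpha>) / (real i + 1))
      \<le> (\<Prod>i=1..j. ((real i + 1) / (real i + 2)) powr (1 - \<alpha>))"
    using assms by (intro prod_mono) (auto intro: shifted_ratio_le_powr)
  also have "\<dots> = (\<Prod>i=1..j. (real i + 1) / (real i + 2)) powr (1 - \<alpha>)"
    by (rule prod_powr_distrib[symmetric])
  also have "(\<Prod>i=1..j. (real i + 1) / (real i + 2)) = 2 / (real j + 2)"
    by (induction j) (auto simp: field_simps)
  finally show ?thesis .
qed

lemma prod_reflected_ratio_bounds:
  fixes q \<alpha> :: real
  assumes "0 \<le> \<alpha>" "\<alpha> \<le> 1" "real j + 1 < q"
  shows "1 \<le> (\<Prod>i=1..j. (q - real i) / (q - real i - 1 + \<alpha>))"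
    and "(\<Prod>i=1..j. (q - real i) / (q - real i - 1 + \<alpha>)) \<le> (q - 1) / (q - 1 - real j)"
proof -
  have pos: "0 < q - real i - 1" if "i \<in> {1..j}" for i
    using that assms by auto
  show "1 \<le> (\<Prod>i=1..j. (q - real i) / (q - real i - 1 + \<alpha>))"
    using pos assms by (intro prod_ge_1) (smt (verit) le_divide_eq_1_pos)
  have "(\<Prod>i=1..j. (q - real i) / (q - real i - 1 + \<alpha>)) \<le> (\<Prod>i=1..j. (q - real i) / (q - real i - 1))"
    using pos assms by (intro prod_mono conjI divide_nonneg_nonneg frac_le) (auto dest!: pos)
  also have "\<dots> = (q - 1) / (q - 1 - real j)"
    using assms(3) by (induction j) (auto simp: field_simps)
  finally show "(\<Prod>i=1..j. (q - real i) / (q - real i - 1 + \<alpha>)) \<le> (q - 1) / (q - 1 - real j)" .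
qed

lemma g_fun_bounds:
  fixes \<alpha> :: real
  assumes "0 \<le> \<alpha>" "\<alpha> \<le> 1" "real j \<le> real p / 2 - 1"
  shows "(1 / (real j + 1)) powr (1 - \<alpha>) \<le> g_fun p \<alpha> j"
    and "g_fun p \<alpha> j \<le> 4 * (1 / (real j + 1)) powr (1 - \<alpha>)"
proof -
  define A where "A = (\<Prod>i=1..j. (real i + \<alpha>) / (real i + 1))"
  define B where "B = (\<Prod>i=1..j. (real p - real i) / (real p - real i - 1 + \<alpha>))"
  have g: "g_fun p \<alpha> j = A * B"
    unfolding g_fun_def A_def B_def by (rule prod.distrib)
  have A_lower: "(1 / (real j + 1)) powr (1 - \<alpha>) \<le> A"
    unfolding A_def using assms(1,2) by (rule prod_shifted_ratio_lower)
  have "A \<le> (2 / (real j + 2)) powr (1 - \<alpha>)"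
    unfolding A_def using assms(1,2) by (rule prod_shifted_ratio_upper)
  also have "\<dots> \<le> (2 * (1 / (real j + 1))) powr (1 - \<alpha>)"
    using assms by (intro powr_mono2) (auto simp: field_simps)
  also have "\<dots> = 2 powr (1 - \<alpha>) * (1 / (real j + 1)) powr (1 - \<alpha>)"
    by (rule powr_mult)
  also have "\<dots> \<le> 2 * (1 / (real j + 1)) powr (1 - \<alpha>)"
    using assms powr_mono[of "1 - \<alpha>" 1 2] by (intro mult_right_mono) auto
  finally have A_upper: "A \<le> 2 * (1 / (real j + 1)) powr (1 - \<alpha>)" .
  have jp: "real j + 1 < real p"
    using assms by linarith
  have B_lower: "1 \<le> B"
    unfolding B_def using assms(1,2) jp by (rule prod_reflected_ratio_bounds)
  have "B \<le> (real p - 1) / (real p - 1 - real j)"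
    unfolding B_def using assms(1,2) jp by (rule prod_reflected_ratio_bounds)
  also have "\<dots> \<le> 2"
    using assms by (simp add: field_simps)
  finally have B_upper: "B \<le> 2" .
  show "(1 / (real j + 1)) powr (1 - \<alpha>) \<le> g_fun p \<alpha> j"
    unfolding g using A_lower B_lower mult_left_mono[of 1 B A] by (smt (verit) powr_ge_zero)
  show "g_fun p \<alpha> j \<le> 4 * (1 / (real j + 1)) powr (1 - \<alpha>)"
    unfolding g using A_upper B_upper A_lower B_lower mult_mono[of A _ B 2]
    by (smt (verit) powr_ge_zero)
qed

theorem lemmaC2:
  fixes \<alpha> :: real
  assumes "0 \<le> \<alpha>" and "\<alpha> \<le> 1"
  shows "\<exists>c1 c2. c1 > 0 \<and> c2 > 0 \<and>
     (\<forall>p j. even p \<and> p > 0 \<and> 1 \<le> j \<and> real j \<le> real p / 2 - 1 \<longrightarrow>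
        c1 * (1 / (real j + 1)) powr (1 - \<alpha>) \<le> g_fun p \<alpha> j \<and>
        g_fun p \<alpha> j \<le> c2 * (1 / (real j + 1)) powr (1 - \<alpha>))"
  using g_fun_bounds[OF assms] by (intro exI[of _ 1] exI[of _ 4]) auto

end
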